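(* Let $p$ be a prime and $Q\in\mathbb{Q}_p[X_1,\dots,X_n]$ any quadratic form. Then the following are equivalent: (i) $R(Q(\mathbb{N}^n))$ is dense in $\mathbb{Q}_p$; (ii) $R(Q(\mathbb{Z}^n))$ is dense in $\mathbb{Q}_p$; (iii) $R(Q(\mathbb{Z}_p^n))$ is dense in $\mathbb{Q}_p$.
   Context: $\mathbb{N}$ denotes the nonnegative integers, $\mathbb{Z}_p$ the $p$-adic integers, and $\mathbb{Q}_p$ carries the $p$-adic topology. A quadratic form is a homogeneous polynomial of degree two, not all coefficients zero. For a subset $A$ of a field, $R(A)=\{a/b: a,b\in A,\ b\neq 0\}$. For $S\subseteq\mathbb{Q}_p^n$, $Q(S)=\{Q(\mathbf{x}):\mathbf{x}\in S\}$. *)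

theory Defs
  imports Complex_Main "HOL-Computational_Algebra.Primes"
begin

definition rat_padic_val :: "nat \<Rightarrow> rat \<Rightarrow> int" where
  "rat_padic_val p q =
     (let (a, b) = quotient_of q in
        int (multiplicity (int p) a) - int (multiplicity (int p) b))"

definition rat_padic_abs :: "nat \<Rightarrow> rat \<Rightarrow> real" where
  "rat_padic_abs p q = (if q = 0 then 0 else real p powr (- real_of_int (rat_padic_val p q)))"

text \<open>Q_p, characterised (uniquely up to isometric isomorphism) as the completion of Q
  w.r.t. the p-adic absolute value: a field K of characteristic 0 with an absolute value
  nv extending the p-adic absolute value on Q, complete, in which Q is dense.\<close>
definition is_Qp :: "nat \<Rightarrow> ('a::field_char_0 \<Rightarrow> real) \<Rightarrow> bool" where
  "is_Qp p nv \<longleftrightarrow>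
     (\<forall>x. nv x \<ge> 0) \<and> (\<forall>x. nv x = 0 \<longleftrightarrow> x = 0) \<and>
     (\<forall>x y. nv (x * y) = nv x * nv y) \<and>
     (\<forall>x y. nv (x + y) \<le> nv x + nv y) \<and>
     (\<forall>q. nv (of_rat q) = rat_padic_abs p q) \<and>
     (\<forall>X::nat \<Rightarrow> 'a. (\<forall>e>0. \<exists>N. \<forall>m\<ge>N. \<forall>k\<ge>N. nv (X m - X k) < e) \<longrightarrow>
          (\<exists>L. \<forall>e>0. \<exists>N. \<forall>k\<ge>N. nv (X k - L) < e)) \<and>
     (\<forall>y. \<forall>e>0. \<exists>q. nv (of_rat q - y) < e)"

definition is_quadratic_form :: "nat \<Rightarrow> (nat \<Rightarrow> nat \<Rightarrow> 'a::comm_ring_1) \<Rightarrow> bool" where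
  "is_quadratic_form n c \<longleftrightarrow> (\<exists>i j. i \<le> j \<and> j < n \<and> c i j \<noteq> 0)"

definition qf_eval :: "nat \<Rightarrow> (nat \<Rightarrow> nat \<Rightarrow> 'a::comm_ring_1) \<Rightarrow> (nat \<Rightarrow> 'a) \<Rightarrow> 'a" where
  "qf_eval n c x = (\<Sum>i<n. \<Sum>j\<in>{i..<n}. c i j * x i * x j)"

text \<open>A^n as functions on {0..<n} (values outside are irrelevant).\<close>
definition cart_pow :: "'a set \<Rightarrow> nat \<Rightarrow> (nat \<Rightarrow> 'a) set" where
  "cart_pow A n = {x. \<forall>i<n. x i \<in> A}"

definition ratio_set :: "'a::field set \<Rightarrow> 'a set" where
  "ratio_set A = {a / b | a b. a \<in> A \<and> b \<in> A \<and> b \<noteq> 0}"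

definition dense_wrt :: "('a::ab_group_add \<Rightarrow> real) \<Rightarrow> 'a set \<Rightarrow> bool" where
  "dense_wrt nv S \<longleftrightarrow> (\<forall>y. \<forall>e>0. \<exists>s\<in>S. nv (s - y) < e)"

end

theory Submission
  imports Defs "HOL-Number_Theory.Cong"
begin

text \<open>Since \<open>\<nat> \<subseteq> \<int> \<subseteq> \<int>\<^sub>p\<close>, density of the smaller ratio sets implies density
  of the larger ones. Conversely, \<open>\<nat>\<close> is dense in \<open>\<int>\<^sub>p\<close>: a rational close to a
  \<open>p\<close>-adic integer has denominator \<open>b\<close> prime to \<open>p\<close>, and \<open>a/b\<close> is congruent to a
  natural number modulo any power of \<open>p\<close>. As \<open>Q\<close> is uniformly continuous on
  \<open>\<int>\<^sub>p\<^sup>n\<close> and division is continuous away from \<open>0\<close>, every ratio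
  \<open>Q(x)/Q(z)\<close> with \<open>x, z \<in> \<int>\<^sub>p\<^sup>n\<close> is then a limit of ratios \<open>Q(x')/Q(z')\<close>
  with \<open>x', z' \<in> \<nat>\<^sup>n\<close>.\<close>

locale absolute_value =
  fixes nv :: "'a::field \<Rightarrow> real"
  assumes nonneg: "nv x \<ge> 0"
    and zero_iff: "nv x = 0 \<longleftrightarrow> x = 0"
    and mult: "nv (x * y) = nv x * nv y"
    and triangle: "nv (x + y) \<le> nv x + nv y"
begin

lemma zero [simp]: "nv 0 = 0"
  by (simp add: zero_iff)

lemma pos: "x \<noteq> 0 \<Longrightarrow> nv x > 0"
  using nonneg[of x] zero_iff[of x] by linarith

lemma one [simp]: "nv 1 = 1"
  using mult[of 1 1] pos[of 1] by simp

lemma minus [simp]: "nv (- x) = nv x"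
proof -
  have "nv (-1) * nv (-1) = 1"
    using mult[of "-1" "-1"] by simp
  then have "(nv (-1) - 1) * (nv (-1) + 1) = 0"
    by (simp add: algebra_simps)
  then have "nv (-1) = 1"
    using nonneg[of "-1"] by simp
  then show ?thesis
    using mult[of "-1" x] by simp
qed

lemma diff_commute: "nv (x - y) = nv (y - x)"
  by (metis minus minus_diff_eq)

lemma diff_le: "nv (x - y) \<le> nv x + nv y"
  using triangle[of x "- y"] by simp

lemma diff_triangle: "nv (x - z) \<le> nv (x - y) + nv (y - z)"
  using triangle[of "x - y" "y - z"] by simp

lemma divide: "nv (x / y) = nv x / nv y"
proof (cases "y = 0")
  case False
  then have "nv (x / y) * nv y = nv x"
    by (metis mult nonzero_eq_divide_eq)
  then show ?thesis
    using pos[OF False] by (simp add: field_simps)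
qed simp

lemma power: "nv (x ^ k) = nv x ^ k"
  by (induction k) (simp_all add: mult)

lemma sum_le: "nv (sum f A) \<le> (\<Sum>i\<in>A. nv (f i))"
proof (induction A rule: infinite_finite_induct)
  case (insert x F)
  then show ?case
    using triangle[of "f x" "sum f F"] by simp
qed simp_all

lemma qf_eval_diff_le:
  assumes x: "\<forall>i<n. nv (x i) \<le> 1" and y: "\<forall>i<n. nv (y i) \<le> 1"
    and d: "\<forall>i<n. nv (y i - x i) \<le> d"
  shows "nv (qf_eval n c y - qf_eval n c x) \<le> 2 * d * (\<Sum>i<n. \<Sum>j\<in>{i..<n}. nv (c i j))"
proof -
  have term_le: "nv (c i j * (y i * y j - x i * x j)) \<le> nv (c i j) * (2 * d)"
    if "i < n" "j < n" for i j
  proof -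
    have "0 \<le> d"
      using d that(1) nonneg[of "y i - x i"] by force
    have "y i * y j - x i * x j = (y i - x i) * y j + x i * (y j - x j)"
      by (simp add: algebra_simps)
    then have "nv (y i * y j - x i * x j) \<le> nv (y i - x i) * nv (y j) + nv (x i) * nv (y j - x j)"
      using triangle mult by metis
    also have "\<dots> \<le> d * 1 + 1 * d"
      using that x y d nonneg \<open>0 \<le> d\<close> by (intro add_mono mult_mono) auto
    finally show ?thesis
      using nonneg by (simp add: mult mult_left_mono)
  qed
  have "qf_eval n c y - qf_eval n c x = (\<Sum>i<n. \<Sum>j\<in>{i..<n}. c i j * (y i * y j - x i * x j))"
    unfolding qf_eval_def by (simp add: sum_subtractf[symmetric] algebra_simps)
  also have "nv \<dots> \<le> (\<Sum>i<n. \<Sum>j\<in>{i..<n}. nv (c i j * (y i * y j - x i * x j)))"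
    by (rule order_trans[OF sum_le sum_mono[OF sum_le]])
  also have "\<dots> \<le> (\<Sum>i<n. \<Sum>j\<in>{i..<n}. nv (c i j) * (2 * d))"
    by (intro sum_mono term_le) auto
  also have "\<dots> = 2 * d * (\<Sum>i<n. \<Sum>j\<in>{i..<n}. nv (c i j))"
    by (simp add: sum_distrib_left sum_distrib_right mult.commute)
  finally show ?thesis .
qed

lemma qf_eval_approx:
  assumes B: "B \<subseteq> {x. nv x \<le> 1}"
    and approx: "\<forall>x. nv x \<le> 1 \<longrightarrow> (\<forall>e>0. \<exists>y\<in>B. nv (y - x) < e)"
    and w: "w \<in> cart_pow {x. nv x \<le> 1} n" and e: "e > 0"
  shows "\<exists>w'\<in>cart_pow B n. nv (qf_eval n c w' - qf_eval n c w) < e"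
proof -
  define C where "C = (\<Sum>i<n. \<Sum>j\<in>{i..<n}. nv (c i j))"
  have "C \<ge> 0"
    unfolding C_def by (intro sum_nonneg) (simp add: nonneg)
  define d where "d = e / (2 * C + 1)"
  have "d > 0" and "2 * d * C < e"
    using \<open>C \<ge> 0\<close> e by (simp_all add: d_def field_simps)
  have "\<forall>i. \<exists>y. i < n \<longrightarrow> y \<in> B \<and> nv (y - w i) < d"
    using approx w \<open>d > 0\<close> unfolding cart_pow_def by blast
  then obtain w' where w': "\<And>i. i < n \<Longrightarrow> w' i \<in> B \<and> nv (w' i - w i) < d"
    by metis
  have "nv (qf_eval n c w' - qf_eval n c w) \<le> 2 * d * C"
    unfolding C_def using w w' B
    by (intro qf_eval_diff_le) (auto simp: cart_pow_def less_imp_le)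
  with w' \<open>2 * d * C < e\<close> show ?thesis
    unfolding cart_pow_def by force
qed

lemma divide_diff_le:
  assumes "b \<noteq> 0" and "b' \<noteq> 0"
  shows "nv (a' / b' - a / b) \<le> (nv (a' - a) * nv b + nv a * nv (b' - b)) / (nv b' * nv b)"
proof -
  have "a' / b' - a / b = ((a' - a) * b - a * (b' - b)) / (b' * b)"
    using assms by (simp add: field_simps)
  then show ?thesis
    using diff_le[of "(a' - a) * b" "a * (b' - b)"] pos[OF assms(1)] pos[OF assms(2)]
    by (simp add: divide mult divide_right_mono)
qed

lemma divide_approx:
  assumes b: "b \<noteq> 0" and e: "e > 0"
  obtains d where "d > 0"
    and "\<And>a' b'. nv (a' - a) < d \<Longrightarrow> nv (b' - b) < d \<Longrightarrow> b' \<noteq> 0 \<and> nv (a' / b' - a / b) < e"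
proof
  let ?K = "nv a + nv b"
  have nb: "nv b > 0" and K: "?K > 0"
    using pos[OF b] nonneg[of a] by simp_all
  define d where "d = min (nv b / 2) (e * nv b ^ 2 / (4 * ?K))"
  show d0: "d > 0"
    unfolding d_def using nb K e by simp
  fix a' b' assume ha: "nv (a' - a) < d" and hb: "nv (b' - b) < d"
  have "nv b \<le> nv (b' - b) + nv b'"
    using diff_triangle[of b 0 b'] diff_commute[of b b'] by simp
  then have nb': "nv b' > nv b / 2"
    using hb unfolding d_def by simp
  then have b': "b' \<noteq> 0"
    using nb by auto
  have "nv (a' / b' - a / b) \<le> (d * nv b + nv a * d) / (nv b / 2 * nv b)"
  proof (rule order_trans[OF divide_diff_le[OF b b'] frac_le])
    show "nv (a' - a) * nv b + nv a * nv (b' - b) \<le> d * nv b + nv a * d"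
      using ha hb d0 by (intro add_mono mult_mono) (auto simp: nonneg)
  qed (use nb nb' d0 nonneg[of a] in auto)
  also have "\<dots> = 2 * d * ?K / nv b ^ 2"
    using nb by (simp add: field_simps power2_eq_square)
  also have "\<dots> \<le> e / 2"
  proof -
    have "d \<le> e * nv b ^ 2 / (4 * ?K)"
      unfolding d_def by simp
    then have "d * (4 * ?K) \<le> e * nv b ^ 2"
      using K by (simp add: pos_le_divide_eq)
    then show ?thesis
      using nb by (simp add: field_simps)
  qed
  finally show "b' \<noteq> 0 \<and> nv (a' / b' - a / b) < e"
    using b' e by simp
qed

lemma dense_ratio_set_qf_eval_transfer:
  assumes B: "B \<subseteq> {x. nv x \<le> 1}"
    and approx: "\<forall>x. nv x \<le> 1 \<longrightarrow> (\<forall>e>0. \<exists>y\<in>B. nv (y - x) < e)"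
    and dense: "dense_wrt nv (ratio_set (qf_eval n c ` cart_pow {x. nv x \<le> 1} n))"
  shows "dense_wrt nv (ratio_set (qf_eval n c ` cart_pow B n))"
  unfolding dense_wrt_def
proof (intro allI impI)
  fix y :: 'a and e :: real
  assume "e > 0"
  then obtain s where "s \<in> ratio_set (qf_eval n c ` cart_pow {x. nv x \<le> 1} n)"
    and close: "nv (s - y) < e / 2"
    using dense unfolding dense_wrt_def by (meson half_gt_zero)
  then obtain x z where s: "s = qf_eval n c x / qf_eval n c z"
    and xz: "x \<in> cart_pow {x. nv x \<le> 1} n" "z \<in> cart_pow {x. nv x \<le> 1} n"
      "qf_eval n c z \<noteq> 0"
    unfolding ratio_set_def by blast
  obtain d where "d > 0" and quotient_close: "\<And>a' b'. nv (a' - qf_eval n c x) < d \<Longrightarrow>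
      nv (b' - qf_eval n c z) < d \<Longrightarrow> b' \<noteq> 0 \<and> nv (a' / b' - qf_eval n c x / qf_eval n c z) < e / 2"
    using divide_approx[OF xz(3), of "e / 2" "qf_eval n c x"] \<open>e > 0\<close> s by auto
  obtain x' z' where "x' \<in> cart_pow B n" "nv (qf_eval n c x' - qf_eval n c x) < d"
    and "z' \<in> cart_pow B n" "nv (qf_eval n c z' - qf_eval n c z) < d"
    using qf_eval_approx[OF B approx _ \<open>d > 0\<close>] xz(1,2) by meson
  with quotient_close[of "qf_eval n c x'" "qf_eval n c z'"]
  have "qf_eval n c z' \<noteq> 0" and "nv (qf_eval n c x' / qf_eval n c z' - s) < e / 2"
    unfolding s by auto
  then have "qf_eval n c x' / qf_eval n c z' \<in> ratio_set (qf_eval n c ` cart_pow B n)"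
    and "nv (qf_eval n c x' / qf_eval n c z' - y) < e"
    using \<open>x' \<in> cart_pow B n\<close> \<open>z' \<in> cart_pow B n\<close> close
      diff_triangle[of "qf_eval n c x' / qf_eval n c z'" y s]
    unfolding ratio_set_def by (fastforce, linarith)
  then show "\<exists>s\<in>ratio_set (qf_eval n c ` cart_pow B n). nv (s - y) < e"
    by blast
qed

end

locale padic_absolute_value = absolute_value nv
  for nv :: "'a::field_char_0 \<Rightarrow> real" +
  fixes p :: nat
  assumes prime: "prime p"
    and of_rat: "nv (of_rat q) = rat_padic_abs p q"
    and dense_rat: "e > 0 \<Longrightarrow> \<exists>q. nv (of_rat q - y) < e"
begin

lemma p_gt_1: "real p > 1"
  using prime prime_gt_1_nat by simp

lemma of_int: "z \<noteq> 0 \<Longrightarrow> nv (of_int z) = real p powr (- real (multiplicity (int p) z))"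
  using of_rat[of "of_int z"] by (simp add: rat_padic_abs_def rat_padic_val_def)

lemma of_int_le_1: "nv (of_int z) \<le> 1"
proof (cases "z = 0")
  case False
  have "1 \<le> real p powr real (multiplicity (int p) z)"
    using p_gt_1 by (intro ge_one_powr_ge_zero) auto
  then show ?thesis
    using of_int[OF False] p_gt_1 by (simp add: powr_minus_divide divide_le_eq_1)
qed simp

lemma of_int_eq_1:
  assumes "\<not> int p dvd z"
  shows "nv (of_int z) = 1"
proof -
  have "z \<noteq> 0"
    using assms by auto
  then show ?thesis
    using of_int[of z] not_dvd_imp_multiplicity_0[OF assms] p_gt_1 by simp
qed

lemma of_nat_p: "nv (of_nat p) = 1 / real p"
proof -
  have "multiplicity (int p) (int p) = 1"
    using prime p_gt_1 by (intro multiplicity_self) (auto simp: prime_int_iff)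
  then show ?thesis
    using of_int[of "int p"] p_gt_1 by (simp add: powr_minus_divide)
qed

lemma of_int_le_if_pow_dvd:
  assumes "int p ^ N dvd z"
  shows "nv (of_int z) \<le> (1 / real p) ^ N"
proof -
  obtain m where "z = int p ^ N * m"
    using assms by blast
  then have "nv (of_int z) = (1 / real p) ^ N * nv (of_int m)"
    by (simp add: mult power of_nat_p)
  also have "\<dots> \<le> (1 / real p) ^ N"
    using of_int_le_1[of m] p_gt_1 by (simp add: mult_left_le)
  finally show ?thesis .
qed

lemma not_dvd_denominator:
  assumes small: "nv (of_rat q) < real p" and q: "quotient_of q = (a, b)"
  shows "\<not> int p dvd b"
proof
  assume "int p dvd b"
  then obtain b' where b': "b = int p * b'"
    by blast
  have "\<not> int p dvd a"
    using \<open>int p dvd b\<close> quotient_of_coprime[OF q] p_gt_1 coprime_common_divisor_int by fastforce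
  then have "nv (of_rat q) = 1 / nv (of_int b)"
    using quotient_of_div[OF q] of_int_eq_1 by (simp add: of_rat_divide divide)
  moreover have "nv (of_int b) \<le> 1 / real p"
    using b' of_int_le_1[of b'] p_gt_1 by (simp add: mult of_nat_p divide_right_mono)
  moreover have "nv (of_int b) > 0"
    using quotient_of_denom_pos[OF q] pos by simp
  ultimately have "nv (of_rat q) \<ge> real p"
    using p_gt_1 by (simp add: le_divide_eq mult.commute)
  with small show False
    by simp
qed

lemma nat_approx_fraction:
  assumes "\<not> int p dvd b"
  obtains k :: nat where "nv (of_nat k - of_int a / of_int b) \<le> (1 / real p) ^ N"
proof -
  let ?P = "int p ^ N"
  have "coprime (int p) b"
    using assms prime by (intro prime_imp_coprime) simp_all
  then have "coprime b ?P"
    by (simp add: coprime_commute)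
  then obtain x where x: "[b * x = 1] (mod ?P)"
    using cong_solve_coprime_int by blast
  define k where "k = nat ((a * x) mod ?P)"
  have "int k = (a * x) mod ?P"
    using p_gt_1 by (simp add: k_def)
  then have "[int k * b = a * (b * x)] (mod ?P)"
    by (metis cong_mod_left cong_refl cong_scalar_right mult.assoc mult.commute)
  also have "[a * (b * x) = a * 1] (mod ?P)"
    using x by (rule cong_scalar_left)
  finally have "nv (of_int (int k * b - a)) \<le> (1 / real p) ^ N"
    by (intro of_int_le_if_pow_dvd) (simp add: cong_iff_dvd_diff)
  moreover have "(of_int b :: 'a) \<noteq> 0"
    using assms by auto
  then have "of_nat k - of_int a / of_int b = (of_int (int k * b - a) / of_int b :: 'a)"
    by (simp add: field_simps)
  ultimately show ?thesis
    using that[of k] of_int_eq_1[OF assms] by (simp add: divide)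
qed

lemma nat_dense_in_unit_ball:
  assumes x: "nv x \<le> 1" and e: "e > 0"
  shows "\<exists>k::nat. nv (of_nat k - x) < e"
proof -
  obtain N where N: "(1 / real p) ^ N < e / 2"
    using real_arch_pow_inv[of "e / 2" "1 / real p"] e p_gt_1 by auto
  obtain q where q: "nv (of_rat q - x) < min (e / 2) 1"
    using dense_rat[of "min (e / 2) 1" x] e by auto
  obtain a b where ab: "quotient_of q = (a, b)"
    by fastforce
  have "nv (of_rat q) < 2"
    using diff_triangle[of "of_rat q" 0 x] q x by simp
  also have "2 \<le> real p"
    using prime prime_ge_2_nat by simp
  finally have "\<not> int p dvd b"
    using not_dvd_denominator ab by blast
  then obtain k :: nat where "nv (of_nat k - of_int a / of_int b) \<le> (1 / real p) ^ N"
    by (rule nat_approx_fraction)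
  moreover have "of_rat q = (of_int a / of_int b :: 'a)"
    using quotient_of_div[OF ab] by (simp add: of_rat_divide)
  ultimately have "nv (of_nat k - x) < e"
    using diff_triangle[of "of_nat k" x "of_rat q"] q N by simp
  then show ?thesis ..
qed

end

lemma is_Qp_imp_padic_absolute_value:
  assumes "prime p" and "is_Qp p nv"
  shows "padic_absolute_value nv p"
proof -
  have "absolute_value nv"
    using assms(2) unfolding is_Qp_def by unfold_locales simp_all
  then show ?thesis
    using assms unfolding is_Qp_def padic_absolute_value_def padic_absolute_value_axioms_def
    by simp
qed

lemma dense_wrt_mono: "S \<subseteq> T \<Longrightarrow> dense_wrt nv S \<Longrightarrow> dense_wrt nv T"
  unfolding dense_wrt_def by blast

lemma ratio_set_mono: "A \<subseteq> B \<Longrightarrow> ratio_set A \<subseteq> ratio_set B"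
  unfolding ratio_set_def by blast

lemma cart_pow_mono: "A \<subseteq> B \<Longrightarrow> cart_pow A n \<subseteq> cart_pow B n"
  unfolding cart_pow_def by blast

theorem lemma1:
  fixes p :: nat and nv :: "'a::field_char_0 \<Rightarrow> real"
    and n :: nat and c :: "nat \<Rightarrow> nat \<Rightarrow> 'a"
  assumes "prime p" and "is_Qp p nv" and "is_quadratic_form n c"
  shows "(dense_wrt nv (ratio_set (qf_eval n c ` cart_pow (range of_nat) n))
            \<longleftrightarrow> dense_wrt nv (ratio_set (qf_eval n c ` cart_pow \<int> n)))
       \<and> (dense_wrt nv (ratio_set (qf_eval n c ` cart_pow \<int> n))
            \<longleftrightarrow> dense_wrt nv (ratio_set (qf_eval n c ` cart_pow {x. nv x \<le> 1} n)))"
    (is "(?dense_nat \<longleftrightarrow> ?dense_int) \<and> (_ \<longleftrightarrow> ?dense_Zp)")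
proof -
  interpret padic_absolute_value nv p
    using assms(1,2) by (rule is_Qp_imp_padic_absolute_value)
  have nat_int: "range (of_nat :: nat \<Rightarrow> 'a) \<subseteq> \<int>"
    by (auto intro: Ints_of_nat)
  have int_ball: "\<int> \<subseteq> {x :: 'a. nv x \<le> 1}"
    by (auto elim!: Ints_cases simp: of_int_le_1)
  have "?dense_nat \<Longrightarrow> ?dense_int"
    by (rule dense_wrt_mono[OF ratio_set_mono[OF image_mono[OF cart_pow_mono[OF nat_int]]]])
  moreover have "?dense_int \<Longrightarrow> ?dense_Zp"
    by (rule dense_wrt_mono[OF ratio_set_mono[OF image_mono[OF cart_pow_mono[OF int_ball]]]])
  moreover have "?dense_Zp \<Longrightarrow> ?dense_nat"
  proof (rule dense_ratio_set_qf_eval_transfer)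
    show "range of_nat \<subseteq> {x. nv x \<le> 1}"
      using nat_int int_ball by (rule order_trans)
    show "\<forall>x. nv x \<le> 1 \<longrightarrow> (\<forall>e>0. \<exists>y\<in>range of_nat. nv (y - x) < e)"
      using nat_dense_in_unit_ball by blast
  qed
  ultimately show ?thesis
    by argo
qed

end
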